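(* Let $\mathcal{X}=G^{\min}/P$ be the affine Grassmannian of the minimal affine Kac–Moody group $\widehat{SL_2}$, and let $c^k_{n,m}\in\mathbb{Z}[\alpha_0,\alpha_1]$ be the $T$-equivariant Schubert structure constants, $\hat{\varepsilon}_n\cdot\hat{\varepsilon}_m=\sum_{k=\max\{n,m\}}^{n+m}c^k_{n,m}\hat{\varepsilon}_k$. Then for integers $n\le m$, $$c^{m}_{n,m}= \begin{cases} \binom{\frac{m+n}{2}}{n}\prod_{i=0}^{n-1}\Big(\big(\tfrac{m-n}{2}+i\big)\alpha_0+\big(\tfrac{m-n}{2}+1+i\big)\alpha_1\Big) & n,m\text{ even},\\[1ex] \binom{\frac{m+n}{2}}{n}\prod_{i=0}^{n-1}\Big(\big(\tfrac{m-n}{2}+1+i\big)\alpha_0+\big(\tfrac{m-n}{2}+i\big)\alpha_1\Big) & n,m\text{ odd},\\[1ex] \binom{\frac{m+n-1}{2}}{n}\prod_{i=0}^{n-1}\Big(\big(\tfrac{m-n+1}{2}+i\big)\alpha_0+\big(\tfrac{m-n+1}{2}+1+i\big)\alpha_1\Big) & n\text{ odd}, m\text{ even},\\[1ex] \binom{\frac{m+n-1}{2}}{n}\prod_{i=0}^{n-1}\Big(\big(\tfrac{m-n+1}{2}+1+i\big)\alpha_0+\big(\tfrac{m-n+1}{2}+i\big)\alpha_1\Big) & n\text{ even}, m\text{ odd}. \end{cases}$$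
   Context: $T$ is the adjoint torus of $\widehat{SL_2}$, $H^\bullet_T(\mathrm{pt})=\mathbb{Z}[\alpha_0,\alpha_1]$ (polynomials in the simple roots), and $\{\hat{\varepsilon}_i\}_{i\ge0}$ is the $T$-equivariant Schubert basis of $H^\bullet_T(\mathcal{X})$ (Kumar's basis), indexed by $w_i$, the alternating word of length $i$ in $s_0,s_1$ ending in $s_0$, where $P$ is the maximal parabolic with Weyl group $\{e,s_1\}$. It satisfies $\hat\varepsilon_0=1$ and the equivariant Chevalley formula $\hat{\varepsilon}_1\cdot\hat{\varepsilon}_m=q_m\hat{\varepsilon}_m+(m+1)\hat{\varepsilon}_{m+1}$ with $q_m=\lceil m/2\rceil^2\alpha_0+(\lfloor m/2\rfloor^2+\lfloor m/2\rfloor)\alpha_1$. An empty product equals $1$. *)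

theory Defs
  imports "HOL-Computational_Algebra.Polynomial"
begin

text \<open>The coefficient ring H_T(pt) = Z[alpha0, alpha1], realised as int poly poly
  (polynomials in alpha0 with coefficients in Z[alpha1]).\<close>

type_synonym coeffring = "int poly poly"

definition alpha0 :: coeffring where "alpha0 = [:0, 1:]"
definition alpha1 :: coeffring where "alpha1 = [:[:0, 1:]:]"

definition qm :: "nat \<Rightarrow> coeffring" where
  "qm m = of_nat (((m + 1) div 2)^2) * alpha0 + of_nat ((m div 2)^2 + m div 2) * alpha1"

text \<open>c a b k is the coefficient of eps_k in eps_a * eps_b.  The predicate says that
  the bilinear product on the free Z[alpha0,alpha1]-module with basis (eps_i) defined by
  these structure constants is a commutative, associative ring product with unit eps_0,
  satisfying the equivariant Chevalley formula.  These conditions determine c uniquely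
  (and the Schubert basis of H_T(X) realises them).\<close>
definition schubert_constants :: "(nat \<Rightarrow> nat \<Rightarrow> nat \<Rightarrow> coeffring) \<Rightarrow> bool" where
  "schubert_constants c \<longleftrightarrow>
     (\<forall>a b. finite {k. c a b k \<noteq> 0}) \<and>
     (\<forall>a b k. c a b k = c b a k) \<and>
     (\<forall>a k. c 0 a k = (if k = a then 1 else 0)) \<and>
     (\<forall>m k. c 1 m k = (if k = m then qm m else if k = Suc m then of_nat (m + 1) else 0)) \<and>
     (\<forall>a b d k. (\<Sum>j\<in>{j. c a b j \<noteq> 0}. c a b j * c j d k)
               = (\<Sum>j\<in>{j. c b d j \<noteq> 0}. c a j k * c b d j))"

end

theory Submission
  imports Defs
begin

text \<open>Associativity applied to \<open>\<epsilon>\<^sub>1 \<epsilon>\<^sub>n \<epsilon>\<^sub>m\<close> together with the Chevalley formula shows that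
  \<open>c\<^sup>k\<^sub>n\<^sub>,\<^sub>m\<close> vanishes for \<open>k < m\<close> and that the diagonal constants obey
  \<open>(n + 1) c\<^sup>m\<^sub>n\<^sub>+\<^sub>1\<^sub>,\<^sub>m = (q\<^sub>m - q\<^sub>n) c\<^sup>m\<^sub>n\<^sub>,\<^sub>m\<close>, with \<open>c\<^sup>m\<^sub>0\<^sub>,\<^sub>m = 1\<close>. Since \<open>q\<^sub>m - q\<^sub>n\<close> factors as
  an integer times a linear form \<open>t \<alpha>\<^sub>0 + (t+1) \<alpha>\<^sub>1\<close> or \<open>(t+1) \<alpha>\<^sub>0 + t \<alpha>\<^sub>1\<close> (according to
  the parity of \<open>m\<close>), the four cases of the closed form are one product of such forms
  times a binomial coefficient, and it satisfies the same recursion.\<close>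

lemma schubert_constants_Chevalley:
  assumes "schubert_constants c"
  shows "c 1 m k = (if k = m then qm m else if k = Suc m then of_nat (m + 1) else 0)"
  using assms unfolding schubert_constants_def by blast

lemma schubert_constants_recursion:
  assumes sc: "schubert_constants c"
  shows "qm n * c n m k + of_nat (Suc n) * c (Suc n) m k
           = (\<Sum>j\<in>{j. c n m j \<noteq> 0}. c 1 j k * c n m j)"
proof -
  have "{j. c 1 n j \<noteq> 0} \<subseteq> {n, Suc n}"
    using schubert_constants_Chevalley[OF sc] by auto
  then have "(\<Sum>j\<in>{j. c 1 n j \<noteq> 0}. c 1 n j * c j m k) = (\<Sum>j\<in>{n, Suc n}. c 1 n j * c j m k)"
    by (intro sum.mono_neutral_left) auto
  also have "\<dots> = qm n * c n m k + of_nat (Suc n) * c (Suc n) m k"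
    using schubert_constants_Chevalley[OF sc] by simp
  also have "(\<Sum>j\<in>{j. c 1 n j \<noteq> 0}. c 1 n j * c j m k)
               = (\<Sum>j\<in>{j. c n m j \<noteq> 0}. c 1 j k * c n m j)"
    using sc unfolding schubert_constants_def by blast
  finally show ?thesis by simp
qed

lemma schubert_constants_vanish_below:
  assumes sc: "schubert_constants c"
  shows "k < m \<Longrightarrow> c n m k = 0"
proof (induction n arbitrary: k)
  case 0
  then show ?case using sc unfolding schubert_constants_def by simp
next
  case (Suc n)
  have "c 1 j k * c n m j = 0" for j
    using Suc.IH schubert_constants_Chevalley[OF sc, of j k] \<open>k < m\<close> by (cases "j < m") auto
  then have "(\<Sum>j\<in>{j. c n m j \<noteq> 0}. c 1 j k * c n m j) = 0"
    by (intro sum.neutral) blast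
  then have "of_nat (Suc n) * c (Suc n) m k = 0"
    using schubert_constants_recursion[OF sc, of n m k] Suc.IH[OF Suc.prems] by simp
  then show ?case by (metis mult_eq_0_iff of_nat_neq_0)
qed

lemma schubert_constants_diagonal_Suc:
  assumes sc: "schubert_constants c"
  shows "of_nat (Suc n) * c (Suc n) m m = (qm m - qm n) * c n m m"
proof -
  let ?S = "{j. c n m j \<noteq> 0}"
  have fin: "finite ?S" using sc unfolding schubert_constants_def by blast
  have only_m: "c 1 j m * c n m j = 0" if "j \<noteq> m" for j
    using that schubert_constants_vanish_below[OF sc, of j m n] schubert_constants_Chevalley[OF sc, of j m]
    by (cases "j < m") auto
  have "(\<Sum>j\<in>?S. c 1 j m * c n m j) = (\<Sum>j\<in>insert m ?S. c 1 j m * c n m j)"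
    by (intro sum.mono_neutral_left) (use fin in auto)
  also have "\<dots> = (\<Sum>j\<in>{m}. c 1 j m * c n m j)"
    by (intro sum.mono_neutral_right) (use fin only_m in auto)
  finally show ?thesis
    using schubert_constants_recursion[OF sc, of n m m] schubert_constants_Chevalley[OF sc, of m m]
    by (simp add: algebra_simps)
qed

lemma schubert_constants_diagonal_unique:
  assumes sc: "schubert_constants c"
    and start: "f 0 = 1"
    and step: "\<And>n. n < m \<Longrightarrow> of_nat (Suc n) * f (Suc n) = (qm m - qm n) * f n"
  shows "n \<le> m \<Longrightarrow> c n m m = f n"
proof (induction n)
  case 0
  then show ?case using sc start unfolding schubert_constants_def by simp
next
  case (Suc n)
  then have "of_nat (Suc n) * c (Suc n) m m = of_nat (Suc n) * f (Suc n)"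
    using schubert_constants_diagonal_Suc[OF sc, of n m] step[of n] by simp
  then show ?case by (metis mult_cancel_left of_nat_neq_0)
qed

definition weight :: "nat \<Rightarrow> nat \<Rightarrow> coeffring" where
  "weight m t = (if even m then of_nat t * alpha0 + of_nat (t + 1) * alpha1
                 else of_nat (t + 1) * alpha0 + of_nat t * alpha1)"

lemma qm_diff_even:
  assumes "m = n + 2 * d"
  shows "qm m - qm n = of_nat d * weight m (n + d)"
proof (cases "even n")
  case True
  then obtain j where "n = 2 * j" by blast
  with assms have "m = 2 * (j + d)" "(m + 1) div 2 = j + d" "m div 2 = j + d"
    "(n + 1) div 2 = j" "n div 2 = j" by simp_all
  then show ?thesis unfolding qm_def weight_def \<open>n = 2 * j\<close>
    by (simp add: algebra_simps power2_eq_square)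
next
  case False
  then obtain j where "n = 2 * j + 1" using oddE by blast
  with assms have "m = 2 * (j + d) + 1" "(m + 1) div 2 = j + d + 1" "m div 2 = j + d"
    "(n + 1) div 2 = j + 1" "n div 2 = j" by simp_all
  then show ?thesis unfolding qm_def weight_def \<open>n = 2 * j + 1\<close>
    by (simp add: algebra_simps power2_eq_square)
qed

lemma qm_diff_odd:
  assumes "m = n + 2 * d + 1"
  shows "qm m - qm n = of_nat (n + 1 + d) * weight m d"
proof (cases "even n")
  case True
  then obtain j where "n = 2 * j" by blast
  with assms have "m = 2 * (j + d) + 1" "(m + 1) div 2 = j + d + 1" "m div 2 = j + d"
    "(n + 1) div 2 = j" "n div 2 = j" by simp_all
  then show ?thesis unfolding qm_def weight_def \<open>n = 2 * j\<close>
    by (simp add: algebra_simps power2_eq_square)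
next
  case False
  then obtain j where "n = 2 * j + 1" using oddE by blast
  with assms have "m = 2 * (j + d + 1)" "(m + 1) div 2 = j + d + 1" "m div 2 = j + d + 1"
    "(n + 1) div 2 = j + 1" "n div 2 = j" by simp_all
  then show ?thesis unfolding qm_def weight_def \<open>n = 2 * j + 1\<close>
    by (simp add: algebra_simps power2_eq_square)
qed

definition diagonal_closed_form :: "nat \<Rightarrow> nat \<Rightarrow> coeffring" where
  "diagonal_closed_form n m =
     of_nat ((n + (m - n) div 2) choose n) * (\<Prod>i<n. weight m ((m - n + 1) div 2 + i))"

text \<open>Passing from \<open>n\<close> to \<open>n + 1\<close> keeps the starting weight when \<open>m - n\<close> is even, so the
  product gains a factor at its end; when \<open>m - n\<close> is odd it gains one at its start.\<close>

lemma diagonal_closed_form_Suc: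
  assumes "n < m"
  shows "of_nat (Suc n) * diagonal_closed_form (Suc n) m = (qm m - qm n) * diagonal_closed_form n m"
proof (cases "even (m - n)")
  case True
  then obtain d where "m - n = 2 * d" by blast
  moreover from this \<open>n < m\<close> obtain e where "d = Suc e" using not0_implies_Suc by fastforce
  ultimately have m: "m = n + 2 * Suc e" using \<open>n < m\<close> by simp
  let ?P = "\<Prod>i<n. weight m (Suc e + i)"
  have "(m - n) div 2 = Suc e" "(m - n + 1) div 2 = Suc e"
    "(m - Suc n) div 2 = e" "(m - Suc n + 1) div 2 = Suc e"
    unfolding m by presburger+
  then have closed: "diagonal_closed_form n m = of_nat (Suc (n + e) choose n) * ?P"
    "diagonal_closed_form (Suc n) m = of_nat (Suc (n + e) choose Suc n) * (?P * weight m (n + Suc e))"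
    by (simp_all add: diagonal_closed_form_def ac_simps del: binomial_Suc_Suc)
  have binom: "Suc n * (Suc (n + e) choose Suc n) = Suc e * (Suc (n + e) choose n)"
    by (rule Suc_times_binomial_add)
  have "of_nat (Suc n) * diagonal_closed_form (Suc n) m
          = (of_nat (Suc e) * weight m (n + Suc e)) * (of_nat (Suc (n + e) choose n) * ?P)"
    unfolding closed mult.assoc[symmetric] of_nat_mult[symmetric] binom
    unfolding of_nat_mult by (simp only: ac_simps)
  then show ?thesis
    unfolding closed qm_diff_even[OF m] .
next
  case False
  then obtain d where "m - n = 2 * d + 1" using oddE by blast
  then have m: "m = n + 2 * d + 1" using \<open>n < m\<close> by simp
  let ?P = "\<Prod>i<n. weight m (Suc d + i)"
  have "(m - n) div 2 = d" "(m - n + 1) div 2 = Suc d"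
    "(m - Suc n) div 2 = d" "(m - Suc n + 1) div 2 = d"
    unfolding m by presburger+
  then have closed: "diagonal_closed_form n m = of_nat (n + d choose n) * ?P"
    "diagonal_closed_form (Suc n) m = of_nat (Suc (n + d) choose Suc n) * (weight m d * ?P)"
    by (simp_all add: diagonal_closed_form_def prod.lessThan_Suc_shift ac_simps
        del: binomial_Suc_Suc prod.lessThan_Suc)
  have binom: "Suc n * (Suc (n + d) choose Suc n) = (n + 1 + d) * (n + d choose n)"
    using Suc_times_binomial[of n "n + d"] by simp
  have "of_nat (Suc n) * diagonal_closed_form (Suc n) m
          = (of_nat (n + 1 + d) * weight m d) * (of_nat (n + d choose n) * ?P)"
    unfolding closed mult.assoc[symmetric] of_nat_mult[symmetric] binom
    unfolding of_nat_mult by (simp only: ac_simps)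
  then show ?thesis
    unfolding closed qm_diff_odd[OF m] .
qed

theorem mainTheorem7:
  fixes c :: "nat \<Rightarrow> nat \<Rightarrow> nat \<Rightarrow> int poly poly" and n m :: nat
  assumes "schubert_constants c" and "n \<le> m"
  shows "c n m m =
    (if even n \<and> even m then
       of_nat (((m + n) div 2) choose n) *
       (\<Prod>i<n. of_nat ((m - n) div 2 + i) * alpha0 + of_nat ((m - n) div 2 + 1 + i) * alpha1)
     else if odd n \<and> odd m then
       of_nat (((m + n) div 2) choose n) *
       (\<Prod>i<n. of_nat ((m - n) div 2 + 1 + i) * alpha0 + of_nat ((m - n) div 2 + i) * alpha1)
     else if odd n \<and> even m then
       of_nat (((m + n - 1) div 2) choose n) *
       (\<Prod>i<n. of_nat ((m - n + 1) div 2 + i) * alpha0 + of_nat ((m - n + 1) div 2 + 1 + i) * alpha1)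
     else
       of_nat (((m + n - 1) div 2) choose n) *
       (\<Prod>i<n. of_nat ((m - n + 1) div 2 + 1 + i) * alpha0 + of_nat ((m - n + 1) div 2 + i) * alpha1))"
    (is "_ = ?closed")
proof -
  have start: "diagonal_closed_form 0 m = 1"
    by (simp add: diagonal_closed_form_def)
  have "c n m m = diagonal_closed_form n m"
    using schubert_constants_diagonal_unique[OF assms(1), of "\<lambda>k. diagonal_closed_form k m"]
      start diagonal_closed_form_Suc assms(2) by blast
  also have "\<dots> = ?closed"
  proof (cases "even (m - n)")
    case True
    with assms(2) have "(m + n) div 2 = n + (m - n) div 2" "(m - n + 1) div 2 = (m - n) div 2"
      "even n \<longleftrightarrow> even m" by presburger+
    then show ?thesis by (simp add: diagonal_closed_form_def weight_def ac_simps)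
  next
    case False
    with assms(2) have "(m + n - 1) div 2 = n + (m - n) div 2" "even n \<longleftrightarrow> odd m"
      by presburger+
    then show ?thesis by (simp add: diagonal_closed_form_def weight_def ac_simps)
  qed
  finally show ?thesis .
qed

end
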